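(* Let $f,g\in\mathrm{Diffeo}^-(\mathbb{R})$ with $f(0)=g(0)=0$ and $f\circ f=g\circ g$, and suppose $(T_0f)\circ(T_0f)=X$. Suppose $0$ is a boundary point of $\mathrm{fix}(f\circ f)=\{x\in\mathbb{R}: f(f(x))=x\}$. Then there exists $h\in\mathrm{Diffeo}^+(\mathbb{R})$ with $f=h^{-1}\circ g\circ h$ if and only if $T_0f=T_0g$.
   Context: $\mathrm{Diffeo}(\mathbb{R})$ is the group of $C^\infty$ diffeomorphisms of $\mathbb{R}$ under composition; $\mathrm{Diffeo}^+(\mathbb{R})$ (resp. $\mathrm{Diffeo}^-(\mathbb{R})$) is the set of orientation-preserving (resp. orientation-reversing) diffeomorphisms. For a diffeomorphism $\phi$ with $\phi(0)=0$, $T_0\phi=\phi'(0)X+\frac{\phi''(0)}{2}X^2+\cdots$ is its Taylor series at $0$, viewed as a formal power series under formal composition; $X$ denotes the identity series. *)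

theory Defs
  imports "HOL-Analysis.Analysis" "HOL-Computational_Algebra.Formal_Power_Series"
begin

definition smooth :: "(real \<Rightarrow> real) \<Rightarrow> bool" where
  "smooth f \<longleftrightarrow> (\<forall>k x. (deriv ^^ k) f differentiable (at x))"

definition diffeo :: "(real \<Rightarrow> real) \<Rightarrow> bool" where
  "diffeo f \<longleftrightarrow> bij f \<and> smooth f \<and> smooth (inv f)"

definition diffeo_plus :: "(real \<Rightarrow> real) \<Rightarrow> bool" where
  "diffeo_plus f \<longleftrightarrow> diffeo f \<and> strict_mono f"

definition diffeo_minus :: "(real \<Rightarrow> real) \<Rightarrow> bool" where
  "diffeo_minus f \<longleftrightarrow> diffeo f \<and> (\<forall>x y. x < y \<longrightarrow> f y < f x)"

definition taylor0 :: "(real \<Rightarrow> real) \<Rightarrow> real fps" where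
  "taylor0 f = Abs_fps (\<lambda>n. (deriv ^^ n) f 0 / fact n)"

end

theory Submission
  imports Defs
begin

text \<open>
  If \<open>T\<^sub>0f = T\<^sub>0g\<close>, the map \<open>h\<close> that is the identity on \<open>[0,\<infinity>)\<close> and \<open>g\<inverse> \<circ> f\<close> on
  \<open>(-\<infinity>,0)\<close> conjugates \<open>f\<close> to \<open>g\<close> (because \<open>f \<circ> f = g \<circ> g\<close>), and it is smooth because
  \<open>g\<inverse> \<circ> f\<close> is infinitely tangent to the identity at \<open>0\<close>.

  Conversely, a conjugacy \<open>h\<close> fixes \<open>0\<close> and commutes with \<open>F = f \<circ> f\<close>, which is flat
  (\<open>T\<^sub>0F = X\<close>) but has non-fixed points arbitrarily close to the right of \<open>0\<close>. A Kopell-type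
  argument shows \<open>T\<^sub>0h = X\<close>, whence \<open>T\<^sub>0f = T\<^sub>0g\<close>. If \<open>T\<^sub>0h = X - cX\<^sup>m + \<dots>\<close> with
  \<open>c > 0\<close>, then \<open>h\<close> pushes points towards \<open>0\<close> by at least \<open>cx\<^sup>m/2\<close> per step, while by the
  mean value theorem the displacement \<open>\<bar>F x - x\<bar>\<close> shrinks along an orbit of \<open>h\<close> no faster than
  \<open>x\<^sup>K\<close> for some fixed \<open>K\<close>; flatness of \<open>F\<close> then keeps the orbit away from \<open>0\<close>, which is
  absurd. So \<open>c < 0\<close> and \<open>h\<close> is expanding near \<open>0\<close>; the same holds for \<open>h\<inverse>\<close>, which is
  absurd as well.
\<close>

unbundle no vec_syntax
notation fps_nth (infixl \<open>$\<close> 75)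

section \<open>Smooth functions\<close>

definition differentiable_upto :: "nat \<Rightarrow> (real \<Rightarrow> real) \<Rightarrow> bool" where
  "differentiable_upto n f \<longleftrightarrow> (\<forall>k<n. \<forall>x. (deriv ^^ k) f differentiable (at x))"

lemma differentiable_upto_0 [simp]: "differentiable_upto 0 f"
  by (simp add: differentiable_upto_def)

lemma differentiable_upto_Suc:
  "differentiable_upto (Suc n) f \<longleftrightarrow>
     (\<forall>x. f differentiable (at x)) \<and> differentiable_upto n (deriv f)"
  unfolding differentiable_upto_def
  by (auto simp: less_Suc_eq_0_disj funpow_Suc_right simp del: funpow.simps)

lemma differentiable_upto_SucD: "differentiable_upto (Suc n) f \<Longrightarrow> differentiable_upto n f"
  by (simp add: differentiable_upto_def)

lemma smooth_iff_differentiable_upto: "smooth f \<longleftrightarrow> (\<forall>n. differentiable_upto n f)"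
  unfolding smooth_def differentiable_upto_def by (meson lessI)

lemma differentiable_upto_add:
  "differentiable_upto n f \<Longrightarrow> differentiable_upto n g \<Longrightarrow> differentiable_upto n (\<lambda>x. f x + g x)"
proof (induction n arbitrary: f g)
  case (Suc n)
  have df: "\<And>x. DERIV f x :> deriv f x" and dg: "\<And>x. DERIV g x :> deriv g x"
    using Suc.prems by (auto simp: differentiable_upto_Suc DERIV_deriv_iff_real_differentiable)
  have "deriv (\<lambda>x. f x + g x) = (\<lambda>x. deriv f x + deriv g x)"
    by (rule ext, rule DERIV_imp_deriv, rule DERIV_add[OF df dg])
  moreover have "(\<lambda>x. f x + g x) differentiable (at x)" for x
    using Suc.prems by (auto simp: differentiable_upto_Suc)
  ultimately show ?case using Suc by (auto simp: differentiable_upto_Suc)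
qed simp

lemma differentiable_upto_mult:
  "differentiable_upto n f \<Longrightarrow> differentiable_upto n g \<Longrightarrow> differentiable_upto n (\<lambda>x. f x * g x)"
proof (induction n arbitrary: f g)
  case (Suc n)
  have df: "\<And>x. DERIV f x :> deriv f x" and dg: "\<And>x. DERIV g x :> deriv g x"
    using Suc.prems by (auto simp: differentiable_upto_Suc DERIV_deriv_iff_real_differentiable)
  have "deriv (\<lambda>x. f x * g x) = (\<lambda>x. deriv f x * g x + f x * deriv g x)"
    by (rule ext, rule DERIV_imp_deriv, rule derivative_eq_intros, rule df, rule dg) auto
  moreover have "differentiable_upto n (\<lambda>x. deriv f x * g x)"
    using Suc.prems differentiable_upto_SucD[OF Suc.prems(2)]
    by (auto simp: differentiable_upto_Suc intro: Suc.IH)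
  moreover have "differentiable_upto n (\<lambda>x. f x * deriv g x)"
    using Suc.prems differentiable_upto_SucD[OF Suc.prems(1)]
    by (auto simp: differentiable_upto_Suc intro: Suc.IH)
  moreover have "(\<lambda>x. f x * g x) differentiable (at x)" for x
    using Suc.prems by (auto simp: differentiable_upto_Suc)
  ultimately show ?case by (auto simp: differentiable_upto_Suc intro: differentiable_upto_add)
qed simp

lemma differentiable_upto_compose:
  "differentiable_upto n f \<Longrightarrow> differentiable_upto n g \<Longrightarrow> differentiable_upto n (\<lambda>x. f (g x))"
proof (induction n arbitrary: f g)
  case (Suc n)
  have df: "\<And>x. DERIV f x :> deriv f x" and dg: "\<And>x. DERIV g x :> deriv g x"
    using Suc.prems by (auto simp: differentiable_upto_Suc DERIV_deriv_iff_real_differentiable)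
  have "deriv (\<lambda>x. f (g x)) = (\<lambda>x. deriv f (g x) * deriv g x)"
    by (rule ext, rule DERIV_imp_deriv, rule DERIV_chain2[OF df dg])
  moreover have "differentiable_upto n (\<lambda>x. deriv f (g x))"
    using Suc.prems differentiable_upto_SucD[OF Suc.prems(2)]
    by (auto simp: differentiable_upto_Suc intro: Suc.IH)
  then have "differentiable_upto n (\<lambda>x. deriv f (g x) * deriv g x)"
    using Suc.prems by (auto simp: differentiable_upto_Suc intro: differentiable_upto_mult)
  moreover have "(\<lambda>x. f (g x)) differentiable (at x)" for x
    using DERIV_chain2[OF df dg] real_differentiable_def by blast
  ultimately show ?case by (auto simp: differentiable_upto_Suc)
qed simp

lemma smooth_mult: "smooth f \<Longrightarrow> smooth g \<Longrightarrow> smooth (\<lambda>x. f x * g x)"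
  by (simp add: smooth_iff_differentiable_upto differentiable_upto_mult)

lemma smooth_compose: "smooth f \<Longrightarrow> smooth g \<Longrightarrow> smooth (\<lambda>x. f (g x))"
  by (simp add: smooth_iff_differentiable_upto differentiable_upto_compose)

lemma smooth_deriv: "smooth f \<Longrightarrow> smooth (deriv f)"
  unfolding smooth_def by (metis funpow_Suc_right o_apply)

lemma smooth_DERIV_funpow: "smooth f \<Longrightarrow> DERIV ((deriv ^^ k) f) x :> (deriv ^^ Suc k) f x"
  unfolding smooth_def by (simp add: DERIV_deriv_iff_real_differentiable)

lemma smooth_DERIV: "smooth f \<Longrightarrow> DERIV f x :> deriv f x"
  using smooth_DERIV_funpow[of f 0] by simp

lemma smooth_isCont_funpow: "smooth f \<Longrightarrow> isCont ((deriv ^^ k) f) x"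
  unfolding smooth_def using differentiable_imp_continuous_within by blast

lemma smooth_isCont: "smooth f \<Longrightarrow> isCont f x"
  using smooth_isCont_funpow[where k=0] by simp

lemma deriv_funpow_add:
  assumes "smooth f" "smooth g"
  shows "(deriv ^^ k) (\<lambda>x. f x + g x) = (\<lambda>x. (deriv ^^ k) f x + (deriv ^^ k) g x)"
proof (induction k)
  case (Suc k)
  have "(deriv ^^ Suc k) (\<lambda>x. f x + g x) = deriv (\<lambda>x. (deriv ^^ k) f x + (deriv ^^ k) g x)"
    using Suc by simp
  also have "\<dots> = (\<lambda>x. (deriv ^^ Suc k) f x + (deriv ^^ Suc k) g x)"
    by (intro ext DERIV_imp_deriv DERIV_add smooth_DERIV_funpow assms)
  finally show ?case .
qed simp

lemma deriv_funpow_ident: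
  "(deriv ^^ k) (\<lambda>x::real. x) = (if k = 0 then (\<lambda>x. x) else if k = 1 then (\<lambda>_. 1) else (\<lambda>_. 0))"
  by (induction k) (auto simp: deriv_const)

lemma smooth_ident: "smooth (\<lambda>x. x)"
  unfolding smooth_def deriv_funpow_ident by simp

section \<open>Taylor series at 0\<close>

lemma taylor0_nth: "taylor0 f $ n = (deriv ^^ n) f 0 / fact n"
  by (simp add: taylor0_def)

lemma taylor0_nth_0 [simp]: "taylor0 f $ 0 = f 0"
  by (simp add: taylor0_nth)

lemma fps_deriv_taylor0: "fps_deriv (taylor0 f) = taylor0 (deriv f)"
  by (rule fps_ext) (simp add: taylor0_nth funpow_Suc_right del: funpow.simps)

lemma taylor0_nth_Suc: "taylor0 f $ Suc n = taylor0 (deriv f) $ n / of_nat (Suc n)"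
  using arg_cong[OF fps_deriv_taylor0[of f], of "\<lambda>F. F $ n"] by (simp add: field_simps)

lemma taylor0_add: "smooth f \<Longrightarrow> smooth g \<Longrightarrow> taylor0 (\<lambda>x. f x + g x) = taylor0 f + taylor0 g"
  by (rule fps_ext) (simp add: taylor0_nth deriv_funpow_add add_divide_distrib)

lemma taylor0_ident: "taylor0 (\<lambda>x. x) = fps_X"
  by (rule fps_ext) (simp add: taylor0_nth deriv_funpow_ident)

lemma taylor0_eq_X_iff: "taylor0 f = fps_X \<longleftrightarrow> (\<forall>k. (deriv ^^ k) f 0 = (if k = 1 then 1 else 0))"
  by (auto simp: fps_eq_iff taylor0_nth)

lemma deriv_mult_smooth:
  "smooth u \<Longrightarrow> smooth v \<Longrightarrow> deriv (\<lambda>x. u x * v x) = (\<lambda>x. deriv u x * v x + u x * deriv v x)"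
  by (intro ext DERIV_imp_deriv, rule derivative_eq_intros, rule smooth_DERIV, assumption,
      rule smooth_DERIV, assumption) auto

lemma deriv_compose_smooth:
  "smooth f \<Longrightarrow> smooth g \<Longrightarrow> deriv (\<lambda>x. f (g x)) = (\<lambda>x. deriv f (g x) * deriv g x)"
  by (intro ext DERIV_imp_deriv DERIV_chain2[OF smooth_DERIV smooth_DERIV])

lemma taylor0_mult:
  assumes "smooth u" "smooth v"
  shows "taylor0 (\<lambda>x. u x * v x) = taylor0 u * taylor0 v"
proof (rule fps_ext)
  fix n show "taylor0 (\<lambda>x. u x * v x) $ n = (taylor0 u * taylor0 v) $ n"
    using assms
  proof (induction n arbitrary: u v)
    case (Suc n)
    note smooth = Suc.prems smooth_deriv[OF Suc.prems(1)] smooth_deriv[OF Suc.prems(2)]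
    have "taylor0 (\<lambda>x. u x * v x) $ Suc n
        = taylor0 (\<lambda>x. deriv u x * v x + u x * deriv v x) $ n / of_nat (Suc n)"
      by (simp add: taylor0_nth_Suc deriv_mult_smooth Suc.prems)
    also have "taylor0 (\<lambda>x. deriv u x * v x + u x * deriv v x)
        = taylor0 (\<lambda>x. deriv u x * v x) + taylor0 (\<lambda>x. u x * deriv v x)"
      using smooth by (intro taylor0_add smooth_mult)
    also have "\<dots> $ n = fps_deriv (taylor0 u * taylor0 v) $ n"
      using smooth by (simp add: Suc.IH fps_deriv_taylor0 fps_deriv_mult del: fps_deriv_nth)
    finally show ?case by (simp only: fps_deriv_nth) simp
  qed simp
qed

lemma taylor0_compose_nth:
  "\<forall>f. smooth f \<longrightarrow> smooth g \<longrightarrow> g 0 = 0 \<longrightarrow>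
    taylor0 (\<lambda>x. f (g x)) $ n = (taylor0 f oo taylor0 g) $ n"
proof (induction n rule: less_induct)
  case (less n)
  show ?case
  proof (cases n)
    case (Suc j)
    show ?thesis
    proof (intro allI impI)
      fix f assume sf: "smooth f" and sg: "smooth g" and g0: "g 0 = 0"
      have "taylor0 (\<lambda>x. f (g x)) $ Suc j
          = taylor0 (\<lambda>x. deriv f (g x) * deriv g x) $ j / of_nat (Suc j)"
        by (simp add: taylor0_nth_Suc deriv_compose_smooth sf sg)
      also have "taylor0 (\<lambda>x. deriv f (g x) * deriv g x)
          = taylor0 (\<lambda>x. deriv f (g x)) * taylor0 (deriv g)"
        by (rule taylor0_mult[OF smooth_compose[OF smooth_deriv[OF sf] sg] smooth_deriv[OF sg]])
      also have "\<dots> $ j = ((taylor0 (deriv f) oo taylor0 g) * taylor0 (deriv g)) $ j"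
        unfolding fps_mult_nth
      proof (rule sum.cong)
        fix i assume "i \<in> {0..j}"
        then have "i < n" using Suc by simp
        then show "taylor0 (\<lambda>x. deriv f (g x)) $ i * taylor0 (deriv g) $ (j - i)
            = (taylor0 (deriv f) oo taylor0 g) $ i * taylor0 (deriv g) $ (j - i)"
          using less.IH[of i] smooth_deriv[OF sf] sg g0 by simp
      qed simp
      also have "\<dots> = fps_deriv (taylor0 f oo taylor0 g) $ j"
        using g0 by (simp only: fps_compose_deriv fps_deriv_taylor0 taylor0_nth_0)
      finally show "taylor0 (\<lambda>x. f (g x)) $ n = (taylor0 f oo taylor0 g) $ n"
        unfolding Suc by (simp only: fps_deriv_nth) simp
    qed
  qed simp
qed

lemma taylor0_compose:
  "smooth f \<Longrightarrow> smooth g \<Longrightarrow> g 0 = 0 \<Longrightarrow> taylor0 (f \<circ> g) = taylor0 f oo taylor0 g"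
  unfolding o_def by (rule fps_ext) (simp add: taylor0_compose_nth)

section \<open>The conjugacy for equal Taylor series\<close>

definition glue :: "(real \<Rightarrow> real) \<Rightarrow> (real \<Rightarrow> real) \<Rightarrow> real \<Rightarrow> real" where
  "glue a b = (\<lambda>x. if 0 \<le> x then a x else b x)"

lemma DERIV_glue_0:
  assumes "DERIV a 0 :> d" "DERIV b 0 :> d" "a 0 = b 0"
  shows "DERIV (glue a b) 0 :> d"
proof -
  have "\<forall>\<^sub>F y in at_right 0. (a y - a 0) / (y - 0) = (glue a b y - glue a b 0) / (y - 0)"
    unfolding eventually_at_filter glue_def by (auto intro!: always_eventually)
  moreover have "((\<lambda>y. (a y - a 0) / (y - 0)) \<longlongrightarrow> d) (at_right 0)"
    using assms(1) unfolding has_field_derivative_iff by (auto intro: filterlim_mono at_le)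
  ultimately have right: "((\<lambda>y. (glue a b y - glue a b 0) / (y - 0)) \<longlongrightarrow> d) (at_right 0)"
    by (rule tendsto_cong[THEN iffD1])
  have "\<forall>\<^sub>F y in at_left 0. (b y - b 0) / (y - 0) = (glue a b y - glue a b 0) / (y - 0)"
    unfolding eventually_at_filter glue_def using assms(3) by (auto intro!: always_eventually)
  moreover have "((\<lambda>y. (b y - b 0) / (y - 0)) \<longlongrightarrow> d) (at_left 0)"
    using assms(2) unfolding has_field_derivative_iff by (auto intro: filterlim_mono at_le)
  ultimately have left: "((\<lambda>y. (glue a b y - glue a b 0) / (y - 0)) \<longlongrightarrow> d) (at_left 0)"
    by (rule tendsto_cong[THEN iffD1])
  show ?thesis
    unfolding has_field_derivative_iff filterlim_at_split using left right by simp
qed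

lemma DERIV_glue:
  assumes a: "\<And>x. DERIV a x :> a' x" and b: "\<And>x. DERIV b x :> b' x"
    and "a 0 = b 0" "a' 0 = b' 0"
  shows "DERIV (glue a b) x :> glue a' b' x"
proof -
  consider "0 < x" | "x < 0" | "x = 0" by linarith
  then show ?thesis
  proof cases
    case 1
    have "\<forall>\<^sub>F y in nhds x. glue a b y = a y"
      using eventually_nhds_in_open[of "{0<..}" x] 1 by (auto elim!: eventually_mono simp: glue_def)
    then show ?thesis using a[of x] 1 by (subst DERIV_cong_ev) (auto simp: glue_def)
  next
    case 2
    have "\<forall>\<^sub>F y in nhds x. glue a b y = b y"
      using eventually_nhds_in_open[of "{..<0}" x] 2 by (auto elim!: eventually_mono simp: glue_def)
    then show ?thesis using b[of x] 2 by (subst DERIV_cong_ev) (auto simp: glue_def)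
  next
    case 3
    have "DERIV b 0 :> a' 0" using b[of 0] assms(4) by simp
    then show ?thesis using DERIV_glue_0[OF a[of 0]] assms(3) 3 by (simp add: glue_def)
  qed
qed

lemma smooth_glue:
  assumes "smooth a" "smooth b" and jets: "\<And>k. (deriv ^^ k) a 0 = (deriv ^^ k) b 0"
  shows "smooth (glue a b)"
proof -
  have DERIV_glue_funpow: "DERIV (glue ((deriv ^^ k) a) ((deriv ^^ k) b)) x
      :> glue ((deriv ^^ Suc k) a) ((deriv ^^ Suc k) b) x" for k x
    by (intro DERIV_glue smooth_DERIV_funpow assms jets)
  have "(deriv ^^ k) (glue a b) = glue ((deriv ^^ k) a) ((deriv ^^ k) b)" for k
  proof (induction k)
    case (Suc k)
    then show ?case using DERIV_glue_funpow by (auto intro!: DERIV_imp_deriv)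
  qed simp
  then show ?thesis
    unfolding smooth_def using DERIV_glue_funpow real_differentiable_def by metis
qed

lemma smooth_glue_ident:
  assumes "smooth \<phi>" "taylor0 \<phi> = fps_X"
  shows "smooth (glue (\<lambda>x. x) \<phi>)"
proof (rule smooth_glue[OF smooth_ident assms(1)])
  show "(deriv ^^ k) (\<lambda>x. x) 0 = (deriv ^^ k) \<phi> 0" for k
    using assms(2) by (simp add: taylor0_eq_X_iff deriv_funpow_ident)
qed

lemma diffeo_minus_bij: "diffeo_minus f \<Longrightarrow> bij f"
  by (simp add: diffeo_minus_def diffeo_def)

lemma diffeo_minus_smooth: "diffeo_minus f \<Longrightarrow> smooth f" "diffeo_minus f \<Longrightarrow> smooth (inv f)"
  by (simp_all add: diffeo_minus_def diffeo_def)

lemma diffeo_minus_inv_f [simp]: "diffeo_minus f \<Longrightarrow> inv f (f x) = x"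
  by (simp add: diffeo_minus_bij bij_is_inj)

lemma diffeo_minus_f_inv [simp]: "diffeo_minus f \<Longrightarrow> f (inv f y) = y"
  by (simp add: diffeo_minus_bij bij_is_surj surj_f_inv_f)

lemma diffeo_minus_less_iff [simp]: "diffeo_minus f \<Longrightarrow> f x < f y \<longleftrightarrow> y < x"
  unfolding diffeo_minus_def by (metis linorder_neq_iff order.asym)

lemma diffeo_minus_inv: "diffeo_minus f \<Longrightarrow> diffeo_minus (inv f)"
  unfolding diffeo_minus_def diffeo_def
  by (metis bij_imp_bij_inv inv_inv_eq diffeo_minus_def diffeo_def diffeo_minus_less_iff
      diffeo_minus_f_inv)

lemma diffeo_minus_pos_iff:
  "diffeo_minus f \<Longrightarrow> f 0 = 0 \<Longrightarrow> 0 < f x \<longleftrightarrow> x < 0"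
  by (metis diffeo_minus_less_iff)

lemma diffeo_minus_neg_iff:
  "diffeo_minus f \<Longrightarrow> f 0 = 0 \<Longrightarrow> f x < 0 \<longleftrightarrow> 0 < x"
  by (metis diffeo_minus_less_iff)

lemma taylor0_inv_compose:
  assumes "diffeo f" "f 0 = 0"
  shows "taylor0 (inv f) oo taylor0 f = fps_X"
proof -
  have "inv f \<circ> f = (\<lambda>x. x)"
    using assms(1) by (auto simp: diffeo_def bij_is_inj)
  then show ?thesis
    using assms taylor0_compose[of "inv f" f] taylor0_ident by (metis diffeo_def)
qed

lemma glue_ident_inverse:
  assumes "\<And>x. x < 0 \<Longrightarrow> \<phi> x < 0" "\<And>x. x < 0 \<Longrightarrow> \<psi> x < 0"
    and "\<And>x. \<psi> (\<phi> x) = x" "\<And>x. \<phi> (\<psi> x) = x"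
  shows "inv (glue (\<lambda>x. x) \<phi>) = glue (\<lambda>x. x) \<psi>" and "bij (glue (\<lambda>x. x) \<phi>)"
proof -
  have left: "glue (\<lambda>x. x) \<psi> (glue (\<lambda>x. x) \<phi> x) = x"
    and right: "glue (\<lambda>x. x) \<phi> (glue (\<lambda>x. x) \<psi> x) = x" for x
    using assms(1,2)[of x] assms(3,4) by (auto simp: glue_def not_le)
  show "inv (glue (\<lambda>x. x) \<phi>) = glue (\<lambda>x. x) \<psi>"
    using left right by (auto intro: inv_equality)
  show "bij (glue (\<lambda>x. x) \<phi>)"
    unfolding bij_def using left right by (metis injI surjI)
qed

lemma diffeo_inv_compose_flat:
  assumes "diffeo f" "diffeo g" "f 0 = 0" "g 0 = 0" "taylor0 f = taylor0 g"
  shows "smooth (\<lambda>x. inv g (f x))" and "taylor0 (\<lambda>x. inv g (f x)) = fps_X"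
proof -
  have sf: "smooth f" and sgi: "smooth (inv g)"
    using assms(1,2) by (simp_all add: diffeo_def)
  then show "smooth (\<lambda>x. inv g (f x))"
    by (rule smooth_compose[rotated])
  show "taylor0 (\<lambda>x. inv g (f x)) = fps_X"
    using taylor0_compose[OF sgi sf assms(3)] taylor0_inv_compose[OF assms(2,4)] assms(5)
    by (simp add: o_def)
qed

lemma diffeo_minus_inv_compose_neg:
  assumes "diffeo_minus f" "diffeo_minus g" "f 0 = 0" "g 0 = 0" "x < 0"
  shows "inv g (f x) < 0"
proof -
  have "inv g 0 = 0"
    using diffeo_minus_inv_f[OF assms(2), of 0] assms(4) by simp
  then show ?thesis
    using assms by (simp add: diffeo_minus_pos_iff diffeo_minus_neg_iff diffeo_minus_inv)
qed

lemma conjugate_if_taylor0_eq: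
  assumes df: "diffeo_minus f" and dg: "diffeo_minus g" and f0: "f 0 = 0" and g0: "g 0 = 0"
    and ff: "f \<circ> f = g \<circ> g" and T: "taylor0 f = taylor0 g"
  shows "\<exists>h. diffeo_plus h \<and> f = inv h \<circ> g \<circ> h"
proof -
  define h where "h = glue (\<lambda>x. x) (\<lambda>x. inv g (f x))"
  define k where "k = glue (\<lambda>x. x) (\<lambda>x. inv f (g x))"
  have diffeos: "diffeo f" "diffeo g"
    using df dg by (simp_all add: diffeo_minus_def)
  have neg: "inv g (f x) < 0" "inv f (g x) < 0" if "x < 0" for x
    using diffeo_minus_inv_compose_neg[OF df dg f0 g0 that]
      diffeo_minus_inv_compose_neg[OF dg df g0 f0 that] by simp_all
  have "inv f (g (inv g (f x))) = x" "inv g (f (inv f (g x))) = x" for x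
    using df dg by simp_all
  note inverse = glue_ident_inverse[OF neg this]
  have invh: "inv h = k" and "bij h"
    using inverse by (simp_all add: h_def k_def)
  have "smooth h" "smooth k"
    unfolding h_def k_def using diffeos f0 g0 T
    by (simp_all add: smooth_glue_ident diffeo_inv_compose_flat)
  have "strict_mono h"
  proof (rule strict_monoI)
    fix x y :: real assume "x < y"
    then show "h x < h y"
      using neg(1)[of x] df diffeo_minus_inv[OF dg] by (auto simp: h_def glue_def)
  qed
  have "f x = k (g (h x))" for x
  proof (cases x "0::real" rule: linorder_cases)
    case greater
    then have "\<not> 0 \<le> g x"
      using diffeo_minus_neg_iff[OF dg g0] by (simp add: not_le)
    with greater have "k (g (h x)) = inv f (g (g x))"
      by (simp add: h_def k_def glue_def)
    also have "\<dots> = inv f (f (f x))"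
      using ff by (metis comp_apply)
    finally show ?thesis
      using df by simp
  next
    case less
    moreover have "0 \<le> f x"
      using less diffeo_minus_pos_iff[OF df f0] by (simp add: less_imp_le)
    ultimately show ?thesis
      using neg(1)[of x] dg by (simp add: h_def k_def glue_def)
  qed (simp add: h_def k_def glue_def f0 g0)
  then have "f = inv h \<circ> g \<circ> h"
    by (simp add: invh fun_eq_iff)
  moreover have "diffeo_plus h"
    using \<open>bij h\<close> \<open>smooth h\<close> \<open>smooth k\<close> \<open>strict_mono h\<close> invh
    by (simp add: diffeo_plus_def diffeo_def)
  ultimately show ?thesis by blast
qed

section \<open>Kopell's lemma\<close>

lemma taylor_remainder_bound:
  assumes su: "smooth u" and n: "0 < n"
  obtains B where "0 \<le> B"
    "\<And>x. x \<in> {0..1} \<Longrightarrow> \<bar>u x - (\<Sum>k<n. (deriv ^^ k) u 0 / fact k * x ^ k)\<bar> \<le> B * x ^ n"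
proof -
  have "continuous_on {0..1} ((deriv ^^ n) u)"
    by (rule continuous_at_imp_continuous_on) (simp add: smooth_isCont_funpow[OF su])
  then have "bounded ((deriv ^^ n) u ` {0..1})"
    by (intro compact_imp_bounded compact_continuous_image) auto
  then obtain B where B: "\<And>t. t \<in> {0..1} \<Longrightarrow> \<bar>(deriv ^^ n) u t\<bar> \<le> B"
    unfolding bounded_real by blast
  have "\<bar>u x - (\<Sum>k<n. (deriv ^^ k) u 0 / fact k * x ^ k)\<bar> \<le> B / fact n * x ^ n"
    if x: "x \<in> {0..1}" for x
  proof (cases "x = 0")
    case True
    have "(\<Sum>k<n. (deriv ^^ k) u 0 / fact k * x ^ k) = (\<Sum>k<n. if k = 0 then u 0 else 0)"
      using True by (intro sum.cong) auto
    with True n B[of 0] show ?thesis by simp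
  next
    case False
    have "\<exists>t. (if x < 0 then x < t \<and> t < 0 else 0 < t \<and> t < x) \<and>
        u x = (\<Sum>m<n. (deriv ^^ m) u 0 / fact m * (x - 0) ^ m) + (deriv ^^ n) u t / fact n * (x - 0) ^ n"
      by (rule Taylor[where a=0 and b=1]) (use n x False smooth_DERIV_funpow[OF su] in auto)
    then obtain t where t: "0 < t" "t < x"
      and eq: "u x = (\<Sum>m<n. (deriv ^^ m) u 0 / fact m * x ^ m) + (deriv ^^ n) u t / fact n * x ^ n"
      using x by auto
    have "\<bar>u x - (\<Sum>k<n. (deriv ^^ k) u 0 / fact k * x ^ k)\<bar> = \<bar>(deriv ^^ n) u t\<bar> / fact n * x ^ n"
      using eq x by (simp add: abs_mult)
    also have "\<dots> \<le> B / fact n * x ^ n"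
      using B[of t] t x by (intro mult_right_mono divide_right_mono) auto
    finally show ?thesis .
  qed
  moreover have "0 \<le> B / fact n"
    using B[of 0] by simp
  ultimately show ?thesis using that by blast
qed

lemma flat_displacement_bound:
  assumes "smooth F" "taylor0 F = fps_X" "2 \<le> n"
  obtains A where "0 \<le> A" "\<And>x. x \<in> {0..1} \<Longrightarrow> \<bar>F x - x\<bar> \<le> A * x ^ n"
proof -
  have "(\<Sum>k<n. (if k = 1 then 1 else 0) / fact k * x ^ k) = (if 1 < n then x else 0)" for x :: real
    by (induction n) (auto simp: less_Suc_eq)
  then have "(\<Sum>k<n. (deriv ^^ k) F 0 / fact k * x ^ k) = x" for x
    using assms(2,3) by (simp add: taylor0_eq_X_iff)
  then show ?thesis
    using taylor_remainder_bound[OF assms(1), of n] assms(3) that by auto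
qed

lemma deriv_leading_term_bound:
  fixes c :: real
  assumes sh: "smooth h" and m: "1 \<le> m"
    and low: "\<And>j. j < m \<Longrightarrow> (deriv ^^ j) h 0 = (if j = 1 then 1 else 0)"
    and top: "(deriv ^^ m) h 0 = (if m = 1 then 1 else 0) - c * fact m"
  obtains M where "0 \<le> M"
    "\<And>\<xi>. \<xi> \<in> {0..1} \<Longrightarrow> \<bar>(1 - deriv h \<xi>) - m * c * \<xi> ^ (m - 1)\<bar> \<le> M * \<xi> ^ m"
proof -
  obtain m' where mm: "m = Suc m'" using m by (cases m) auto
  have D: "(deriv ^^ k) (deriv h) 0 = (deriv ^^ Suc k) h 0" for k
    by (simp add: funpow_Suc_right del: funpow.simps)
  have below: "(\<Sum>k<m'. (deriv ^^ k) (deriv h) 0 / fact k * \<xi> ^ k) = (if 0 < m' then 1 else 0)"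
    for \<xi> :: real
  proof -
    have "(\<Sum>k<m'. (deriv ^^ k) (deriv h) 0 / fact k * \<xi> ^ k) = (\<Sum>k<m'. if k = 0 then 1 else 0)"
      by (intro sum.cong refl) (simp add: D low mm del: funpow.simps)
    then show ?thesis by simp
  qed
  have "(deriv ^^ m') (deriv h) 0 = (if m = 1 then 1 else 0) - m * c * fact m'"
    using D[of m'] top mm by simp
  then have lead: "(deriv ^^ m') (deriv h) 0 / fact m' * \<xi> ^ m'
      = (if m = 1 then 1 else 0) / fact m' * \<xi> ^ m' - m * c * \<xi> ^ m'" for \<xi> :: real
    by (simp add: diff_divide_distrib left_diff_distrib)
  have sum: "(\<Sum>k<m. (deriv ^^ k) (deriv h) 0 / fact k * \<xi> ^ k) = 1 - m * c * \<xi> ^ (m - 1)"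
    for \<xi> :: real
    unfolding mm sum.lessThan_Suc below lead by (cases m') auto
  obtain B where "0 \<le> B" and B: "\<And>x. x \<in> {0..1} \<Longrightarrow>
      \<bar>deriv h x - (\<Sum>k<m. (deriv ^^ k) (deriv h) 0 / fact k * x ^ k)\<bar> \<le> B * x ^ m"
    using taylor_remainder_bound[OF smooth_deriv[OF sh], of m] m by auto
  show ?thesis
  proof (rule that[OF \<open>0 \<le> B\<close>])
    fix \<xi> :: real assume "\<xi> \<in> {0..1}"
    then show "\<bar>(1 - deriv h \<xi>) - m * c * \<xi> ^ (m - 1)\<bar> \<le> B * \<xi> ^ m"
      using B[of \<xi>] unfolding sum by (simp add: abs_minus_commute)
  qed
qed

text \<open>\<open>m\<close> is the first index at which \<open>T\<^sub>0h\<close> differs from \<open>X\<close>, and \<open>T\<^sub>0h = X - cX\<^sup>m + \<dots>\<close>.\<close>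

lemma deriv_deviation_bound:
  assumes "smooth h" "h 0 = 0" "taylor0 h \<noteq> fps_X"
  obtains m c M where "1 \<le> m" "c \<noteq> (0::real)" "0 \<le> M"
    "\<And>\<xi>. \<xi> \<in> {0..1} \<Longrightarrow> \<bar>(1 - deriv h \<xi>) - m * c * \<xi> ^ (m - 1)\<bar> \<le> M * \<xi> ^ m"
proof -
  define m where "m = (LEAST j. taylor0 h $ j \<noteq> fps_X $ j)"
  define c where "c = fps_X $ m - taylor0 h $ m"
  have "\<exists>j. taylor0 h $ j \<noteq> fps_X $ j"
    using assms(3) fps_ext by blast
  then have "taylor0 h $ m \<noteq> fps_X $ m"
    unfolding m_def by (rule LeastI_ex)
  then have "c \<noteq> 0" and "1 \<le> m"
    using assms(2) by (auto simp: c_def Suc_le_eq intro: gr0I)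
  have below: "taylor0 h $ j = fps_X $ j" if "j < m" for j
    using not_less_Least[OF that[unfolded m_def]] by blast
  have low: "(deriv ^^ j) h 0 = (if j = 1 then 1 else 0)" if "j < m" for j
    using below[OF that] by (simp add: taylor0_nth split: if_splits)
  have top: "(deriv ^^ m) h 0 = (if m = 1 then 1 else 0) - c * fact m"
    unfolding c_def by (simp add: taylor0_nth)
  show ?thesis
    using deriv_leading_term_bound[OF assms(1) \<open>1 \<le> m\<close> low top] that[OF \<open>1 \<le> m\<close> \<open>c \<noteq> 0\<close>]
    by blast
qed

lemma expanding_if_deviation_neg:
  fixes c :: real
  assumes sh: "smooth h" and h0: "h 0 = 0" and m: "1 \<le> m" and c: "c < 0" and M: "0 \<le> M"
    and dev: "\<And>\<xi>. \<xi> \<in> {0..1} \<Longrightarrow> \<bar>(1 - deriv h \<xi>) - m * c * \<xi> ^ (m - 1)\<bar> \<le> M * \<xi> ^ m"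
  obtains \<epsilon> where "0 < \<epsilon>" "\<And>x. 0 < x \<Longrightarrow> x < \<epsilon> \<Longrightarrow> x < h x"
proof -
  define \<epsilon> where "\<epsilon> = min 1 (- c / (M + 1))"
  have \<epsilon>: "0 < \<epsilon>"
    unfolding \<epsilon>_def using c M by (simp add: divide_neg_pos)
  have deriv_gt_1: "1 < deriv h \<xi>" if "0 < \<xi>" "\<xi> < \<epsilon>" for \<xi>
  proof -
    have "\<xi> * (M + 1) < - c"
      using that M by (simp add: \<epsilon>_def field_simps)
    moreover have "m * c \<le> c"
      using m c by (simp add: mult_le_cancel_right2)
    ultimately have neg: "m * c + M * \<xi> < 0"
      using that by (simp add: algebra_simps)
    have "1 - deriv h \<xi> \<le> m * c * \<xi> ^ (m - 1) + M * \<xi> ^ m"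
      using dev[of \<xi>] that by (auto simp: \<epsilon>_def abs_le_iff)
    also have "\<dots> = \<xi> ^ (m - 1) * (m * c + M * \<xi>)"
      using power_minus_mult[of m \<xi>] m by (simp add: algebra_simps)
    also have "\<dots> < 0"
      using neg that by (simp add: mult_pos_neg)
    finally show ?thesis by simp
  qed
  have "x < h x" if x: "0 < x" "x < \<epsilon>" for x
  proof -
    obtain z where z: "0 < z" "z < x" "h x - h 0 = (x - 0) * deriv h z"
      using MVT2[of 0 x h "deriv h"] smooth_DERIV[OF sh] x by auto
    then show ?thesis
      using deriv_gt_1[of z] x h0 by (simp add: mult_less_cancel_left1)
  qed
  with \<epsilon> that show ?thesis by blast
qed

lemma contraction_estimate:
  fixes c :: real
  assumes sh: "smooth h" and mono: "strict_mono h" and h0: "h 0 = 0"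
    and m: "1 \<le> m" and c: "0 < c" and M: "0 \<le> M"
    and dev: "\<And>\<xi>. \<xi> \<in> {0..1} \<Longrightarrow> \<bar>(1 - deriv h \<xi>) - m * c * \<xi> ^ (m - 1)\<bar> \<le> M * \<xi> ^ m"
    and x: "0 < x" "x \<le> 1" "M * x \<le> c / 2"
  shows "h x \<le> x - c / 2 * x ^ m"
proof -
  have "\<exists>\<eta>::real. 0 < \<eta> \<and> \<eta> < x \<and>
      ((x - h x) - (0 - h 0)) * (m * \<eta> ^ (m - 1)) = (x ^ m - 0 ^ m) * (1 - deriv h \<eta>)"
    by (rule GMVT'[where f="\<lambda>y. y - h y" and g="\<lambda>y. y ^ m"])
      (use x(1) smooth_isCont[OF sh] smooth_DERIV[OF sh] in
        \<open>auto intro!: continuous_intros derivative_eq_intros\<close>)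
  then obtain \<eta> :: real where \<eta>: "0 < \<eta>" "\<eta> < x"
    and gmvt: "((x - h x) - (0 - h 0)) * (m * \<eta> ^ (m - 1)) = (x ^ m - 0 ^ m) * (1 - deriv h \<eta>)"
    by blast
  have pos: "0 < m * \<eta> ^ (m - 1)"
    using m \<eta> by simp
  have "M * \<eta> \<le> M * x"
    using M \<eta> by (intro mult_left_mono) auto
  moreover have "c \<le> m * c"
    using m c by (simp add: mult_le_cancel_right1)
  ultimately have "M * \<eta> \<le> m * c / 2"
    using x(3) by linarith
  then have "c / 2 * (m * \<eta> ^ (m - 1)) \<le> m * c * \<eta> ^ (m - 1) - M * \<eta> ^ m"
    using power_minus_mult[of m \<eta>] m \<eta> mult_right_mono[of "M * \<eta>" "m * c / 2" "\<eta> ^ (m - 1)"]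
    by (simp add: algebra_simps)
  also have "\<dots> \<le> 1 - deriv h \<eta>"
    using dev[of \<eta>] \<eta> x by (auto simp: abs_le_iff)
  finally have "x ^ m * (c / 2 * (m * \<eta> ^ (m - 1))) \<le> x ^ m * (1 - deriv h \<eta>)"
    by (rule mult_left_mono) (use x in simp)
  also have "\<dots> = (x - h x) * (m * \<eta> ^ (m - 1))"
    using gmvt h0 m by (simp add: zero_power)
  finally have "c / 2 * x ^ m * (m * \<eta> ^ (m - 1)) \<le> (x - h x) * (m * \<eta> ^ (m - 1))"
    by (simp add: algebra_simps)
  then have "c / 2 * x ^ m \<le> x - h x"
    using pos by (rule mult_right_le_imp_le)
  then show ?thesis by simp
qed

lemma deriv_lower_estimate:
  fixes c :: real
  assumes m: "1 \<le> m" and c: "0 \<le> c" and M: "0 \<le> M"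
    and dev: "\<And>\<xi>. \<xi> \<in> {0..1} \<Longrightarrow> \<bar>(1 - deriv h \<xi>) - m * c * \<xi> ^ (m - 1)\<bar> \<le> M * \<xi> ^ m"
    and \<xi>: "0 < \<xi>" "\<xi> < 2 * x" "2 * x \<le> 1"
  shows "1 - (m * c * 2 ^ (m - 1) + M * 2 ^ m) * x ^ (m - 1) \<le> deriv h \<xi>"
proof -
  have "1 - deriv h \<xi> \<le> m * c * \<xi> ^ (m - 1) + M * \<xi> ^ m"
    using dev[of \<xi>] \<xi> by (auto simp: abs_le_iff)
  also have "\<dots> \<le> m * c * (2 * x) ^ (m - 1) + M * (2 * x) ^ m"
    using \<xi> c M by (intro add_mono mult_left_mono power_mono) auto
  also have "\<dots> = m * c * 2 ^ (m - 1) * x ^ (m - 1) + M * 2 ^ m * x ^ m"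
    by (simp add: power_mult_distrib)
  also have "\<dots> \<le> m * c * 2 ^ (m - 1) * x ^ (m - 1) + M * 2 ^ m * x ^ (m - 1)"
    using power_decreasing[of "m - 1" m x] \<xi> M by (intro add_left_mono mult_left_mono) auto
  finally show ?thesis
    by (simp add: algebra_simps)
qed

lemma power_one_minus_le:
  fixes t d e \<beta> :: real
  assumes t: "0 \<le> t" "t \<le> 1" and "1 - e \<le> d" "0 \<le> \<beta>" "\<beta> \<le> d" "e \<le> K * \<beta> * t"
  shows "(1 - t) ^ K \<le> d"
proof -
  have "1 + K * t \<le> (1 + t) ^ K"
    using Bernoulli_inequality[of t K] t by simp
  then have "(1 - t) ^ K * (1 + K * t) \<le> (1 - t) ^ K * (1 + t) ^ K"
    using t by (intro mult_left_mono) auto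
  also have "\<dots> = (1 - t\<^sup>2) ^ K"
    by (simp add: power_mult_distrib[symmetric] power2_eq_square algebra_simps)
  also have "\<dots> \<le> 1"
    using t by (intro power_le_one) (auto simp: power2_eq_square mult_le_one)
  also have "1 \<le> d * (1 + K * t)"
    using assms mult_right_mono[of \<beta> d "K * t"] by (simp add: algebra_simps)
  finally show ?thesis
    using t by (simp add: add_pos_nonneg mult_le_cancel_right)
qed

lemma smooth_MVT_near:
  assumes "smooth h" "0 < x" "\<bar>y - x\<bar> \<le> x / 2"
  obtains \<xi> where "0 < \<xi>" "\<xi> < 2 * x" "h y - h x = (y - x) * deriv h \<xi>"
proof (cases y x rule: linorder_cases)
  case less
  then obtain z where "y < z" "z < x" "h x - h y = (x - y) * deriv h z"
    using MVT2[of y x h "deriv h"] smooth_DERIV[OF assms(1)] by blast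
  with that[of z] assms show ?thesis
    by (simp add: algebra_simps abs_if split: if_splits)
next
  case greater
  then obtain z where "x < z" "z < y" "h y - h x = (y - x) * deriv h z"
    using MVT2[of x y h "deriv h"] smooth_DERIV[OF assms(1)] by blast
  with that[of z] assms show ?thesis
    by (simp add: abs_if split: if_splits)
qed (use that[of x] assms in simp)

text \<open>Since \<open>h\<close> commutes with \<open>F\<close>, the mean value theorem gives
  \<open>F (h x) - h x = h'(\<xi>) (F x - x)\<close>; the lower bound on \<open>h'\<close> beats \<open>(h x / x)\<^sup>K\<close> once
  \<open>K\<close> is large.\<close>

lemma displacement_ratio_bound:
  fixes h F :: "real \<Rightarrow> real" and a A \<beta> x :: real
  assumes sh: "smooth h" and comm: "h (F x) = F (h x)"
    and x: "0 < x" and hx: "0 < h x" "h x \<le> x - a * x ^ m" and a: "0 \<le> a" and m: "1 \<le> m"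
    and Fx: "\<bar>F x - x\<bar> \<le> x / 2"
    and dh: "\<And>\<xi>. 0 < \<xi> \<Longrightarrow> \<xi> < 2 * x \<Longrightarrow> 1 - A * x ^ (m - 1) \<le> deriv h \<xi> \<and> \<beta> \<le> deriv h \<xi>"
    and \<beta>: "0 \<le> \<beta>" and K: "A \<le> K * a * \<beta>"
  shows "(h x / x) ^ K * \<bar>F x - x\<bar> \<le> \<bar>F (h x) - h x\<bar>"
proof -
  obtain \<xi> where \<xi>: "0 < \<xi>" "\<xi> < 2 * x" and mvt: "h (F x) - h x = (F x - x) * deriv h \<xi>"
    using smooth_MVT_near[OF sh x Fx] by blast
  define t where "t = 1 - h x / x"
  have t: "0 \<le> t" "t \<le> 1" "a * x ^ (m - 1) \<le> t"
  proof -
    have "a * x ^ (m - 1) * x \<le> x - h x"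
      using hx(2) power_minus_mult[of m x] m by (simp add: algebra_simps)
    then show "a * x ^ (m - 1) \<le> t"
      using x by (simp add: t_def field_simps)
    then show "0 \<le> t"
      using a x by (meson order_trans zero_le_mult_iff zero_le_power less_imp_le)
    show "t \<le> 1"
      using x hx(1) by (simp add: t_def)
  qed
  have "A * x ^ (m - 1) \<le> K * \<beta> * t"
  proof -
    have "A * x ^ (m - 1) \<le> K * \<beta> * (a * x ^ (m - 1))"
      using K x by (simp add: mult_right_mono mult.commute mult.left_commute)
    also have "\<dots> \<le> K * \<beta> * t"
      using t(3) \<beta> by (intro mult_left_mono) auto
    finally show ?thesis .
  qed
  then have "(1 - t) ^ K \<le> deriv h \<xi>"
    using power_one_minus_le[OF t(1,2)] dh[OF \<xi>] \<beta> by blast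
  then have "(h x / x) ^ K * \<bar>F x - x\<bar> \<le> deriv h \<xi> * \<bar>F x - x\<bar>"
    by (simp add: t_def mult_right_mono)
  also have "\<dots> = \<bar>F (h x) - h x\<bar>"
    using mvt comm dh[OF \<xi>] \<beta> by (simp add: abs_mult)
  finally show ?thesis .
qed

lemma orbit_displacement_lower_bound:
  fixes h F :: "real \<Rightarrow> real"
  assumes step: "\<And>x. 0 < x \<Longrightarrow> x < \<epsilon> \<Longrightarrow>
      0 < h x \<and> h x \<le> x \<and> (h x / x) ^ K * \<bar>F x - x\<bar> \<le> \<bar>F (h x) - h x\<bar>"
    and x0: "0 < x0" "x0 < \<epsilon>"
  shows "0 < (h ^^ n) x0 \<and> (h ^^ n) x0 \<le> x0 \<and>
    ((h ^^ n) x0 / x0) ^ K * \<bar>F x0 - x0\<bar> \<le> \<bar>F ((h ^^ n) x0) - (h ^^ n) x0\<bar>"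
proof (induction n)
  case (Suc n)
  define x where "x = (h ^^ n) x0"
  have x: "0 < x" "x \<le> x0" "(x / x0) ^ K * \<bar>F x0 - x0\<bar> \<le> \<bar>F x - x\<bar>"
    using Suc by (simp_all add: x_def)
  note hx = step[OF x(1) order.strict_trans1[OF x(2) x0(2)]]
  have "(h x / x0) ^ K * \<bar>F x0 - x0\<bar> = (h x / x) ^ K * ((x / x0) ^ K * \<bar>F x0 - x0\<bar>)"
    using x x0 by (simp add: power_divide field_simps)
  also have "\<dots> \<le> (h x / x) ^ K * \<bar>F x - x\<bar>"
    using x hx by (intro mult_left_mono) auto
  also have "\<dots> \<le> \<bar>F (h x) - h x\<bar>"
    using hx by simp
  finally show ?case
    using hx x by (simp add: x_def)
qed (use x0 in simp)

lemma orbit_bounded_below: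
  fixes h F :: "real \<Rightarrow> real"
  assumes step: "\<And>x. 0 < x \<Longrightarrow> x < \<epsilon> \<Longrightarrow>
      0 < h x \<and> h x \<le> x \<and> (h x / x) ^ K * \<bar>F x - x\<bar> \<le> \<bar>F (h x) - h x\<bar>"
    and flat: "\<And>x. 0 < x \<Longrightarrow> x < \<epsilon> \<Longrightarrow> \<bar>F x - x\<bar> \<le> B * x ^ (K + 1)"
    and x0: "0 < x0" "x0 < \<epsilon>" "F x0 \<noteq> x0"
  obtains lb where "0 < lb" "\<And>n. lb \<le> (h ^^ n) x0" "\<And>n. (h ^^ n) x0 \<le> x0"
proof -
  define D where "D = \<bar>F x0 - x0\<bar>"
  note orbit = orbit_displacement_lower_bound[OF step x0(1,2), folded D_def]
  have D: "0 < D"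
    using x0 by (simp add: D_def)
  with flat[OF x0(1,2)] have "0 < B * x0 ^ (K + 1)"
    unfolding D_def by linarith
  then have B: "0 < B"
    using x0 by (metis zero_less_mult_pos2 zero_less_power)
  define lb where "lb = D / (x0 ^ K * B)"
  have "lb \<le> (h ^^ n) x0" for n
  proof -
    define x where "x = (h ^^ n) x0"
    have x: "0 < x" "x < \<epsilon>"
      using orbit[of n] x0 by (auto simp: x_def)
    have "x ^ K * (D / x0 ^ K) \<le> x ^ K * (B * x)"
      using orbit[of n] flat[OF x] by (simp add: x_def power_divide algebra_simps)
    moreover have "0 < x ^ K"
      using x by simp
    ultimately have "D / x0 ^ K \<le> B * x"
      by (rule mult_left_le_imp_le)
    then show ?thesis
      using B x0 by (simp add: x_def lb_def field_simps)
  qed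
  moreover have "0 < lb"
    using D B x0 by (simp add: lb_def)
  ultimately show ?thesis
    using that orbit by blast
qed

lemma no_contraction_with_flat_displacement:
  fixes h F :: "real \<Rightarrow> real"
  assumes step: "\<And>x. 0 < x \<Longrightarrow> x < \<epsilon> \<Longrightarrow>
      0 < h x \<and> h x \<le> x - a * x ^ m \<and> (h x / x) ^ K * \<bar>F x - x\<bar> \<le> \<bar>F (h x) - h x\<bar>"
    and flat: "\<And>x. 0 < x \<Longrightarrow> x < \<epsilon> \<Longrightarrow> \<bar>F x - x\<bar> \<le> B * x ^ (K + 1)"
    and a: "0 < a" and x0: "0 < x0" "x0 < \<epsilon>" "F x0 \<noteq> x0"
  shows False
proof -
  have "h x \<le> x" if "0 < x" "x < \<epsilon>" for x
  proof -
    have "0 \<le> a * x ^ m"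
      using a that by simp
    then show ?thesis
      using step[OF that] by linarith
  qed
  with step obtain lb where lb: "0 < lb" "\<And>n. lb \<le> (h ^^ n) x0" "\<And>n. (h ^^ n) x0 \<le> x0"
    using orbit_bounded_below[OF _ flat x0] by blast
  have descent: "(h ^^ n) x0 \<le> x0 - n * (a * lb ^ m)" for n
  proof (induction n)
    case (Suc n)
    have "(h ^^ Suc n) x0 \<le> (h ^^ n) x0 - a * ((h ^^ n) x0) ^ m"
      using step[of "(h ^^ n) x0"] lb(1) lb(2,3)[of n] x0 by simp
    moreover have "a * lb ^ m \<le> a * ((h ^^ n) x0) ^ m"
      using lb(1) lb(2)[of n] a by (intro mult_left_mono power_mono) auto
    ultimately show ?case
      using Suc by (simp add: algebra_simps)
  qed simp
  obtain n :: nat where "x0 < n * (a * lb ^ m)"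
    using reals_Archimedean3[of "a * lb ^ m"] a lb(1) by auto
  then show False
    using descent[of n] lb(1) lb(2)[of n] by linarith
qed

lemma diffeo_plus_inv: "diffeo_plus h \<Longrightarrow> diffeo_plus (inv h)"
  unfolding diffeo_plus_def diffeo_def
  by (metis bij_imp_bij_inv inv_inv_eq bij_is_surj bij_is_inj inv_f_f strict_mono_inv)

lemma diffeo_plus_deriv_pos:
  assumes "diffeo_plus h"
  shows "0 < deriv h x"
proof -
  have sh: "smooth h" and sih: "smooth (inv h)" and bh: "bij h" and mono: "strict_mono h"
    using assms by (auto simp: diffeo_plus_def diffeo_def)
  have "DERIV (\<lambda>y. inv h (h y)) x :> deriv (inv h) (h x) * deriv h x"
    by (rule DERIV_chain2[OF smooth_DERIV[OF sih] smooth_DERIV[OF sh]])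
  moreover have "DERIV (\<lambda>y. inv h (h y)) x :> 1"
    using bh by (simp add: bij_is_inj)
  ultimately have "deriv (inv h) (h x) * deriv h x = 1"
    by (rule DERIV_unique)
  then have "deriv h x \<noteq> 0"
    by auto
  moreover have "\<not> deriv h x < 0"
  proof
    assume "deriv h x < 0"
    then obtain d where "0 < d" "\<And>t. 0 < t \<Longrightarrow> t < d \<Longrightarrow> h (x + t) < h x"
      using DERIV_neg_dec_right[OF smooth_DERIV[OF sh]] by blast
    then have "h (x + d / 2) < h x"
      by simp
    moreover have "h x < h (x + d / 2)"
      using \<open>0 < d\<close> by (intro strict_monoD[OF mono]) simp
    ultimately show False
      by simp
  qed
  ultimately show ?thesis by simp
qed

lemma diffeo_plus_deriv_lower_bound:
  assumes "diffeo_plus h"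
  obtains \<epsilon> \<beta> where "0 < \<epsilon>" "0 < \<beta>" "\<And>\<xi>. 0 < \<xi> \<Longrightarrow> \<xi> < \<epsilon> \<Longrightarrow> \<beta> \<le> deriv h \<xi>"
proof -
  define \<beta> where "\<beta> = deriv h 0 / 2"
  have \<beta>: "0 < \<beta>"
    using diffeo_plus_deriv_pos[OF assms] by (simp add: \<beta>_def)
  have "isCont (deriv h) 0"
    using assms by (intro smooth_isCont smooth_deriv) (simp add: diffeo_plus_def diffeo_def)
  then obtain \<epsilon> where "0 < \<epsilon>" and \<epsilon>: "\<And>\<xi>. \<bar>\<xi>\<bar> < \<epsilon> \<Longrightarrow> \<bar>deriv h \<xi> - deriv h 0\<bar> < \<beta>"
    using \<beta> unfolding continuous_at_eps_delta dist_real_def by force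
  show ?thesis
  proof (rule that[OF \<open>0 < \<epsilon>\<close> \<beta>])
    fix \<xi> :: real assume "0 < \<xi>" "\<xi> < \<epsilon>"
    then have "\<bar>deriv h \<xi> - deriv h 0\<bar> < \<beta>"
      using \<epsilon> by simp
    then have "- \<beta> < deriv h \<xi> - deriv h 0"
      by (simp add: abs_less_iff)
    then show "\<beta> \<le> deriv h \<xi>"
      unfolding \<beta>_def by linarith
  qed
qed

lemma flat_displacement_half:
  assumes "smooth F" "taylor0 F = fps_X"
  obtains \<epsilon> where "0 < \<epsilon>" "\<And>x. 0 < x \<Longrightarrow> x < \<epsilon> \<Longrightarrow> \<bar>F x - x\<bar> \<le> x / 2"
proof -
  obtain A where A: "0 \<le> A" "\<And>x. x \<in> {0..1} \<Longrightarrow> \<bar>F x - x\<bar> \<le> A * x ^ 2"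
    using flat_displacement_bound[OF assms, of 2] by auto
  define \<epsilon> where "\<epsilon> = 1 / (2 * A + 2)"
  have "\<bar>F x - x\<bar> \<le> x / 2" if x: "0 < x" "x < \<epsilon>" for x
  proof -
    have "2 * x + 2 * (A * x) < 1"
      using x A(1) by (simp add: \<epsilon>_def field_simps)
    moreover have "0 \<le> A * x"
      using x A(1) by simp
    ultimately have small: "x \<le> 1" "A * x \<le> 1 / 2"
      using x by linarith+
    then have "\<bar>F x - x\<bar> \<le> (A * x) * x"
      using A(2)[of x] x by (simp add: power2_eq_square algebra_simps)
    also have "\<dots> \<le> x / 2"
      using small x by (simp add: mult_right_mono)
    finally show ?thesis .
  qed
  moreover have "0 < \<epsilon>"
    using A(1) by (simp add: \<epsilon>_def add_pos_nonneg)
  ultimately show ?thesis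
    using that by blast
qed

lemma contracting_if_deviation_pos:
  fixes c :: real
  assumes sh: "smooth h" and mono: "strict_mono h" and h0: "h 0 = 0"
    and m: "1 \<le> m" and c: "0 < c" and M: "0 \<le> M"
    and dev: "\<And>\<xi>. \<xi> \<in> {0..1} \<Longrightarrow> \<bar>(1 - deriv h \<xi>) - m * c * \<xi> ^ (m - 1)\<bar> \<le> M * \<xi> ^ m"
  obtains \<epsilon> A where "0 < \<epsilon>"
    "\<And>x. 0 < x \<Longrightarrow> x < \<epsilon> \<Longrightarrow> 0 < h x \<and> h x \<le> x - c / 2 * x ^ m"
    "\<And>x \<xi>. 0 < x \<Longrightarrow> x < \<epsilon> \<Longrightarrow> 0 < \<xi> \<Longrightarrow> \<xi> < 2 * x \<Longrightarrow> 1 - A * x ^ (m - 1) \<le> deriv h \<xi>"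
proof -
  define \<epsilon> where "\<epsilon> = min (1 / 2) (c / (2 * M + 2))"
  have small: "2 * x \<le> 1" "M * x \<le> c / 2" if "0 < x" "x < \<epsilon>" for x
    using that M by (auto simp: \<epsilon>_def field_simps)
  show ?thesis
  proof (rule that)
    show "0 < \<epsilon>"
      using c M by (simp add: \<epsilon>_def add_pos_nonneg)
    show "0 < h x \<and> h x \<le> x - c / 2 * x ^ m" if "0 < x" "x < \<epsilon>" for x
      using strict_monoD[OF mono \<open>0 < x\<close>] h0 small[OF that]
        contraction_estimate[OF sh mono h0 m c M dev \<open>0 < x\<close>] by simp
    show "1 - (m * c * 2 ^ (m - 1) + M * 2 ^ m) * x ^ (m - 1) \<le> deriv h \<xi>"
      if "0 < x" "x < \<epsilon>" "0 < \<xi>" "\<xi> < 2 * x" for x \<xi>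
      using deriv_lower_estimate[OF m _ M dev] c small[OF that(1,2)] that(3,4) by simp
  qed
qed

lemma no_contraction_commuting_with_flat:
  fixes c :: real
  assumes dp: "diffeo_plus h" and h0: "h 0 = 0" and m: "1 \<le> m" and c: "0 < c" and M: "0 \<le> M"
    and dev: "\<And>\<xi>. \<xi> \<in> {0..1} \<Longrightarrow> \<bar>(1 - deriv h \<xi>) - m * c * \<xi> ^ (m - 1)\<bar> \<le> M * \<xi> ^ m"
    and sF: "smooth F" and TF: "taylor0 F = fps_X" and comm: "\<And>x. h (F x) = F (h x)"
    and acc: "\<And>\<epsilon>. 0 < \<epsilon> \<Longrightarrow> \<exists>y. 0 < y \<and> y < \<epsilon> \<and> F y \<noteq> y"
  shows False
proof -
  have sh: "smooth h" and mono: "strict_mono h"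
    using dp by (auto simp: diffeo_plus_def diffeo_def)
  obtain \<epsilon>1 \<beta> where "0 < \<epsilon>1" "0 < \<beta>" and h'_lower: "\<And>\<xi>. 0 < \<xi> \<Longrightarrow> \<xi> < \<epsilon>1 \<Longrightarrow> \<beta> \<le> deriv h \<xi>"
    using diffeo_plus_deriv_lower_bound[OF dp] by blast
  obtain \<epsilon>2 A where "0 < \<epsilon>2"
    and contr: "\<And>x. 0 < x \<Longrightarrow> x < \<epsilon>2 \<Longrightarrow> 0 < h x \<and> h x \<le> x - c / 2 * x ^ m"
    and h'_bound: "\<And>x \<xi>. 0 < x \<Longrightarrow> x < \<epsilon>2 \<Longrightarrow> 0 < \<xi> \<Longrightarrow> \<xi> < 2 * x \<Longrightarrow>
      1 - A * x ^ (m - 1) \<le> deriv h \<xi>"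
    using contracting_if_deviation_pos[OF sh mono h0 m c M dev] by blast
  obtain \<epsilon>3 where "0 < \<epsilon>3" and Fx: "\<And>x. 0 < x \<Longrightarrow> x < \<epsilon>3 \<Longrightarrow> \<bar>F x - x\<bar> \<le> x / 2"
    using flat_displacement_half[OF sF TF] by blast
  define K where "K = nat \<lceil>A / (c / 2 * \<beta>)\<rceil> + 1"
  have "A / (c / 2 * \<beta>) \<le> K"
    unfolding K_def using real_nat_ceiling_ge[of "A / (c / 2 * \<beta>)"] by linarith
  then have K: "A \<le> K * (c / 2) * \<beta>"
    using c \<open>0 < \<beta>\<close> by (simp add: pos_divide_le_eq mult.assoc)
  obtain B where B: "\<And>x. x \<in> {0..1} \<Longrightarrow> \<bar>F x - x\<bar> \<le> B * x ^ (K + 1)"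
    using flat_displacement_bound[OF sF TF, of "K + 1"] by (auto simp: K_def)
  define \<epsilon> where "\<epsilon> = min (min (\<epsilon>1 / 2) \<epsilon>2) (min \<epsilon>3 1)"
  have step: "0 < h x \<and> h x \<le> x - c / 2 * x ^ m \<and> (h x / x) ^ K * \<bar>F x - x\<bar> \<le> \<bar>F (h x) - h x\<bar>"
    if x: "0 < x" "x < \<epsilon>" for x
  proof -
    have "1 - A * x ^ (m - 1) \<le> deriv h \<xi> \<and> \<beta> \<le> deriv h \<xi>" if "0 < \<xi>" "\<xi> < 2 * x" for \<xi>
      using h'_bound[OF x(1) _ that] h'_lower[OF that(1)] x that by (simp add: \<epsilon>_def)
    then have "(h x / x) ^ K * \<bar>F x - x\<bar> \<le> \<bar>F (h x) - h x\<bar>"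
      using displacement_ratio_bound[OF sh comm x(1) _ _ _ m Fx[OF x(1)], of "c / 2" A \<beta> K]
        contr[OF x(1)] x K c \<open>0 < \<beta>\<close> by (simp add: \<epsilon>_def)
    with contr[OF x(1)] x show ?thesis
      by (simp add: \<epsilon>_def)
  qed
  have "0 < \<epsilon>"
    using \<open>0 < \<epsilon>1\<close> \<open>0 < \<epsilon>2\<close> \<open>0 < \<epsilon>3\<close> by (simp add: \<epsilon>_def)
  then obtain x0 where "0 < x0" "x0 < \<epsilon>" "F x0 \<noteq> x0"
    using acc by blast
  moreover have "\<bar>F x - x\<bar> \<le> B * x ^ (K + 1)" if "0 < x" "x < \<epsilon>" for x
    using B[of x] that by (simp add: \<epsilon>_def)
  ultimately show False
    using no_contraction_with_flat_displacement[OF step, where B = B] c by auto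
qed

lemma expanding_if_taylor0_ne_X:
  assumes dp: "diffeo_plus h" and h0: "h 0 = 0" and T: "taylor0 h \<noteq> fps_X"
    and sF: "smooth F" and TF: "taylor0 F = fps_X" and comm: "\<And>x. h (F x) = F (h x)"
    and acc: "\<And>\<epsilon>. 0 < \<epsilon> \<Longrightarrow> \<exists>y. 0 < y \<and> y < \<epsilon> \<and> F y \<noteq> y"
  obtains \<epsilon> where "0 < \<epsilon>" "\<And>x. 0 < x \<Longrightarrow> x < \<epsilon> \<Longrightarrow> x < h x"
proof -
  have sh: "smooth h"
    using dp by (simp add: diffeo_plus_def diffeo_def)
  show ?thesis
  proof (rule deriv_deviation_bound[OF sh h0 T])
    fix m c M
    assume m: "1 \<le> m" and c: "c \<noteq> 0" and M: "0 \<le> M"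
      and dev: "\<And>\<xi>. \<xi> \<in> {0..1} \<Longrightarrow> \<bar>(1 - deriv h \<xi>) - m * c * \<xi> ^ (m - 1)\<bar> \<le> M * \<xi> ^ m"
    have "\<not> 0 < c"
      using no_contraction_commuting_with_flat[OF dp h0 m _ M dev sF TF comm acc] by blast
    with c have "c < 0"
      by simp
    then show ?thesis
      using expanding_if_deviation_neg[OF sh h0 m _ M dev] that by blast
  qed
qed

lemma taylor0_eq_X_if_commutes_with_flat:
  assumes dp: "diffeo_plus h" and h0: "h 0 = 0"
    and sF: "smooth F" and TF: "taylor0 F = fps_X" and comm: "\<And>x. h (F x) = F (h x)"
    and acc: "\<And>\<epsilon>. 0 < \<epsilon> \<Longrightarrow> \<exists>y. 0 < y \<and> y < \<epsilon> \<and> F y \<noteq> y"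
  shows "taylor0 h = fps_X"
proof (rule ccontr)
  assume T: "taylor0 h \<noteq> fps_X"
  have sh: "smooth h" and sih: "smooth (inv h)" and bh: "bij h"
    using dp by (auto simp: diffeo_plus_def diffeo_def)
  have ih: "inv h (h x) = x" and hi: "h (inv h x) = x" for x
    using bh by (simp_all add: bij_is_inj bij_is_surj surj_f_inv_f)
  have ih0: "inv h 0 = 0"
    using ih[of 0] h0 by simp
  have comm_inv: "inv h (F y) = F (inv h y)" for y
    using comm[of "inv h y"] hi ih by metis
  have T_inv: "taylor0 (inv h) \<noteq> fps_X"
  proof
    assume "taylor0 (inv h) = fps_X"
    moreover have "h \<circ> inv h = (\<lambda>x. x)"
      using hi by (simp add: fun_eq_iff)
    ultimately show False
      using taylor0_compose[OF sh sih ih0] taylor0_ident T by simp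
  qed
  obtain \<epsilon>1 where "0 < \<epsilon>1" and h_exp: "\<And>x. 0 < x \<Longrightarrow> x < \<epsilon>1 \<Longrightarrow> x < h x"
    using expanding_if_taylor0_ne_X[OF dp h0 T sF TF comm acc] by blast
  obtain \<epsilon>2 where "0 < \<epsilon>2" and inv_exp: "\<And>x. 0 < x \<Longrightarrow> x < \<epsilon>2 \<Longrightarrow> x < inv h x"
    using expanding_if_taylor0_ne_X[OF diffeo_plus_inv[OF dp] ih0 T_inv sF TF comm_inv acc] by blast
  obtain s where "0 < s" and s: "\<And>x. \<bar>x\<bar> < s \<Longrightarrow> \<bar>h x\<bar> < \<epsilon>2"
    using smooth_isCont[OF sh, of 0] \<open>0 < \<epsilon>2\<close> h0
    unfolding continuous_at_eps_delta dist_real_def by force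
  define x where "x = min \<epsilon>1 s / 2"
  have x: "0 < x" "x < \<epsilon>1" "\<bar>x\<bar> < s"
    using \<open>0 < \<epsilon>1\<close> \<open>0 < s\<close> by (auto simp: x_def)
  then have "x < h x" and "h x < \<epsilon>2"
    using h_exp s[of x] by auto
  then have "h x < inv h (h x)"
    using inv_exp x(1) by simp
  then show False
    using \<open>x < h x\<close> ih by simp
qed

section \<open>Conjugate maps have equal Taylor series\<close>

lemma diffeo_minus_fixpoint_eq_0:
  "diffeo_minus g \<Longrightarrow> g 0 = 0 \<Longrightarrow> g y = y \<Longrightarrow> y = 0"
  using diffeo_minus_pos_iff[of g y] diffeo_minus_neg_iff[of g y] by force

lemma nonfixed_points_accumulate_right:
  assumes df: "diffeo_minus f" and f0: "f 0 = 0" and fr: "0 \<in> frontier {x. f (f x) = x}"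
    and "0 < \<epsilon>"
  shows "\<exists>y. 0 < y \<and> y < \<epsilon> \<and> f (f y) \<noteq> y"
proof -
  obtain s where "0 < s" and s: "\<And>x. \<bar>x\<bar> < s \<Longrightarrow> \<bar>f x\<bar> < \<epsilon>"
    using smooth_isCont[OF diffeo_minus_smooth(1)[OF df], of 0] \<open>0 < \<epsilon>\<close> f0
    unfolding continuous_at_eps_delta dist_real_def by force
  have "0 \<notin> interior {x. f (f x) = x}"
    using fr by (simp add: frontier_def)
  then have "\<not> ball 0 (min \<epsilon> s) \<subseteq> {x. f (f x) = x}"
    using \<open>0 < \<epsilon>\<close> \<open>0 < s\<close> unfolding mem_interior by force
  then obtain y where "y \<in> ball 0 (min \<epsilon> s)" "f (f y) \<noteq> y"
    by blast
  then have y: "\<bar>y\<bar> < \<epsilon>" "\<bar>y\<bar> < s" "f (f y) \<noteq> y"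
    by (auto simp: dist_real_def)
  consider "0 < y" | "y < 0"
    using y(3) f0 by fastforce
  then show ?thesis
  proof cases
    case 2
    have "f (f (f y)) \<noteq> f y"
      using y(3) df by (metis diffeo_minus_inv_f)
    with 2 s[OF y(2)] show ?thesis
      using diffeo_minus_pos_iff[OF df f0] by (intro exI[of _ "f y"]) auto
  qed (use y in auto)
qed

lemma taylor0_eq_if_conjugate:
  assumes df: "diffeo_minus f" and dg: "diffeo_minus g" and f0: "f 0 = 0" and g0: "g 0 = 0"
    and ff: "f \<circ> f = g \<circ> g" and Tff: "taylor0 f oo taylor0 f = fps_X"
    and fr: "0 \<in> frontier {x. f (f x) = x}"
    and dp: "diffeo_plus h" and conj: "f = inv h \<circ> g \<circ> h"
  shows "taylor0 f = taylor0 g"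
proof -
  have sh: "smooth h"
    using dp by (simp add: diffeo_plus_def diffeo_def)
  have hf: "h (f x) = g (h x)" for x
    using conj dp by (simp add: diffeo_plus_def diffeo_def bij_is_surj surj_f_inv_f)
  have h0: "h 0 = 0"
    using diffeo_minus_fixpoint_eq_0[OF dg g0] hf[of 0] f0 by simp
  define F where "F = (\<lambda>x. f (f x))"
  have "smooth F"
    unfolding F_def by (rule smooth_compose[OF diffeo_minus_smooth(1)[OF df] diffeo_minus_smooth(1)[OF df]])
  moreover have "taylor0 F = fps_X"
    using taylor0_compose[OF diffeo_minus_smooth(1)[OF df] diffeo_minus_smooth(1)[OF df] f0] Tff
    by (simp add: F_def o_def)
  moreover have "h (F x) = F (h x)" for x
  proof -
    have "h (f (f x)) = g (g (h x))"
      by (simp add: hf)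
    also have "\<dots> = f (f (h x))"
      using ff by (metis comp_apply)
    finally show ?thesis
      by (simp add: F_def)
  qed
  moreover have "\<exists>y. 0 < y \<and> y < \<epsilon> \<and> F y \<noteq> y" if "0 < \<epsilon>" for \<epsilon>
    unfolding F_def by (rule nonfixed_points_accumulate_right[OF df f0 fr that])
  ultimately have Th: "taylor0 h = fps_X"
    by (rule taylor0_eq_X_if_commutes_with_flat[OF dp h0])
  have "h \<circ> f = g \<circ> h"
    using hf by (simp add: fun_eq_iff)
  then have "taylor0 h oo taylor0 f = taylor0 g oo taylor0 h"
    using taylor0_compose[OF sh diffeo_minus_smooth(1)[OF df] f0]
      taylor0_compose[OF diffeo_minus_smooth(1)[OF dg] sh h0] by simp
  then show ?thesis
    using Th f0 by simp
qed

theorem theorem4p3: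
  fixes f g :: "real \<Rightarrow> real"
  assumes "diffeo_minus f" and "diffeo_minus g"
    and "f 0 = 0" and "g 0 = 0"
    and "f \<circ> f = g \<circ> g"
    and "fps_compose (taylor0 f) (taylor0 f) = fps_X"
    and "0 \<in> frontier {x. f (f x) = x}"
  shows "(\<exists>h. diffeo_plus h \<and> f = inv h \<circ> g \<circ> h) \<longleftrightarrow> taylor0 f = taylor0 g"
  using conjugate_if_taylor0_eq[OF assms(1-5)] taylor0_eq_if_conjugate[OF assms] by blast

end
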